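(* For complex numbers $z,w$ with $|z|<1$, $|w|<\frac14$ and $w(1+z)^2\neq z$, $$P(z,w):=\sum_{n\ge0}P_n(z)w^n=\frac{C(w)-(z+1)}{w(1+z)^2-z},$$ $$Q(z,w):=\sum_{n\ge0}Q_n(z)w^n=\frac{(C(w)-(z+1))(z+1)}{w(1+z)^2-z}=P(z,w)(z+1).$$
   Context: $C_n=\frac{1}{n+1}\binom{2n}{n}$ are the Catalan numbers and $C(w)=\sum_{n\ge0}C_nw^n=\frac{1-\sqrt{1-4w}}{2w}$ for $|w|<\frac14$. The Catalan triangle numbers are $B_{n,k}=\frac{k}{n}\binom{2n}{n-k}$ ($n\ge1$, $1\le k\le n$) and $A_{n,k}=\frac{2k-1}{2n+1}\binom{2n+1}{n+1-k}$ ($n\ge0$, $1\le k\le n+1$). For $n\ge0$, $P_n(z)=\sum_{j=0}^n B_{n+1,j+1}z^j$ and $Q_n(z)=\sum_{j=0}^{n+1}A_{n+1,j+1}z^j$. *)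

theory Defs
  imports "HOL-Analysis.Analysis"
begin

definition catalan :: "nat \<Rightarrow> nat" where
  "catalan n = (2*n choose n) div (n+1)"

definition catalan_gf :: "complex \<Rightarrow> complex" where
  "catalan_gf w = (\<Sum>n. of_nat (catalan n) * w ^ n)"

definition catB :: "nat \<Rightarrow> nat \<Rightarrow> real" where
  "catB n k = real k / real n * real (2*n choose (n-k))"

definition catA :: "nat \<Rightarrow> nat \<Rightarrow> real" where
  "catA n k = (2 * real k - 1) / (2 * real n + 1) * real (2*n+1 choose (n+1-k))"

definition polyP :: "nat \<Rightarrow> complex \<Rightarrow> complex" where
  "polyP n z = (\<Sum>j=0..n. complex_of_real (catB (n+1) (j+1)) * z ^ j)"

definition polyQ :: "nat \<Rightarrow> complex \<Rightarrow> complex" where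
  "polyQ n z = (\<Sum>j=0..n+1. complex_of_real (catA (n+1) (j+1)) * z ^ j)"

end

theory Submission
  imports Defs "HOL-Complex_Analysis.Cauchy_Integral_Formula"
begin

(*
  Let C be the Catalan power series. Up to rescaling, 1 - 2XC is the binomial series of
  (1 - 4X)^(1/2), so (1 - 2XC)^2 = 1 - 4X, i.e. D := X C^2 = C - 1. Multiplying by C^r gives
  X C^(r+2) = C^(r+1) - C^r, and induction on r yields the ballot numbers
  [X^m] C^r = r/(2m+r) binom(2m+r, m). In particular B_{n+1,j+1} = [X^(n+1)] D^(j+1), so
  X * sum_n P_n(z) X^n is X/(1 - zX) composed with D, that is, sum_n P_n(z) X^n = C^2/(1 - z X C^2).
  For |w| < 1/4 all these series converge, |C(w)| <= sum_n C_n/4^n <= 2 keeps the denominator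
  1 - z w C(w)^2 away from 0 when |z| < 1, and w C(w)^2 = C(w) - 1 turns the value into the
  stated closed form. Finally A_{n+1,j+1} = B_{n+1,j+1} + B_{n+1,j} gives Q_n(z) = P_n(z) (z + 1).
*)

section \<open>Catalan numbers\<close>

declare binomial_Suc_Suc [simp del] \<comment> \<open>Pascal's rule would destroy the closed forms below\<close>

lemma Suc_times_binomial_Suc: "Suc k * (n choose Suc k) = (n - k) * (n choose k)"
  by (simp only: binomial_absorption binomial_absorb_comp)

lemma odd_central_binomial_mult: "(2*n + 1 choose n) * Suc n = (2*n + 1) * (2*n choose n)"
  using Suc_times_binomial_eq[of "2*n" n] binomial_symmetric[of n "2*n+1"] by simp

lemma central_binomial_Suc: "(2*n + 2 choose Suc n) * Suc n = 2 * (2*n + 1) * (2*n choose n)"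
proof -
  have "(2*n + 2 choose Suc n) = 2 * (2*n + 1 choose n)"
    using binomial_Suc_Suc[of "2*n + 1" n] binomial_symmetric[of n "2*n+1"] by simp
  then show ?thesis
    using odd_central_binomial_mult by (metis mult.assoc)
qed

lemma catalan_mult_Suc: "catalan n * Suc n = (2*n choose n)"
proof -
  have "Suc n * (2*n choose Suc n) = n * (2*n choose n)"
    using Suc_times_binomial_Suc[of n "2*n"] by simp
  then have "(2*n choose n) = Suc n * ((2*n choose n) - (2*n choose Suc n))"
    by (simp add: algebra_simps diff_mult_distrib2)
  then show ?thesis
    unfolding catalan_def by (metis dvd_div_mult_self dvd_triv_left Suc_eq_plus1)
qed

lemma catalan_Suc: "(n + 2) * catalan (Suc n) = 2 * (2*n + 1) * catalan n"
proof -
  have "(n + 2) * catalan (Suc n) * Suc n = (2*n + 2 choose Suc n) * Suc n"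
    using catalan_mult_Suc[of "Suc n"] by (simp add: algebra_simps)
  also have "\<dots> = 2 * (2*n + 1) * catalan n * Suc n"
    by (simp only: central_binomial_Suc catalan_mult_Suc[symmetric] mult.assoc)
  finally show ?thesis by (simp only: mult_right_cancel nat.distinct(1) simp_thms)
qed

lemma sum_catalan_div_4_power:
  "(\<Sum>n<N. real (catalan n) / 4^n) = 2 - 2 * real (2*N choose N) / 4^N"
proof (induction N)
  case 0
  then show ?case by simp
next
  case (Suc N)
  have "(N + 1) * real (2 * Suc N choose Suc N) = (N + 1) * (4 * real (2*N choose N) - 2 * real (catalan N))"
    using arg_cong[OF central_binomial_Suc[of N], of real] arg_cong[OF catalan_mult_Suc[of N], of real]
    by (simp add: algebra_simps)
  then have next_central: "real (2 * Suc N choose Suc N) = 4 * real (2*N choose N) - 2 * real (catalan N)"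
    by (simp only: mult_left_cancel)
  show ?case
    unfolding sum.lessThan_Suc Suc.IH next_central by (simp add: field_simps)
qed

lemma sum_catalan_div_4_power_le: "(\<Sum>n<N. real (catalan n) / 4^n) \<le> 2"
  by (simp add: sum_catalan_div_4_power)

section \<open>The Catalan power series and its powers\<close>

lemma gbinomial_half_Suc:
  "((1/2 :: 'a :: field_char_0) gchoose Suc n) * (-4) ^ Suc n = -2 * of_nat (catalan n)"
proof (induction n)
  case 0
  then show ?case by (simp add: catalan_def)
next
  case (Suc n)
  have step: "of_nat (Suc (Suc n)) * ((1/2 :: 'a) gchoose Suc (Suc n)) = (1/2 - of_nat (Suc n)) * (1/2 gchoose Suc n)"
    by (simp only: gbinomial_absorption gbinomial_absorb_comp)
  have "of_nat (Suc (Suc n)) * (((1/2 :: 'a) gchoose Suc (Suc n)) * (-4) ^ Suc (Suc n))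
      = -4 * ((of_nat (Suc (Suc n)) * ((1/2 :: 'a) gchoose Suc (Suc n))) * (-4) ^ Suc n)"
    by (simp only: power_Suc[of _ "Suc n"] mult_ac)
  also have "\<dots> = -4 * (1/2 - of_nat (Suc n)) * (((1/2) gchoose Suc n) * (-4) ^ Suc n)"
    by (simp only: step mult.assoc)
  also have "\<dots> = -2 * (2 * (2 * of_nat n + 1) * of_nat (catalan n))"
    by (simp only: Suc.IH) (simp add: algebra_simps)
  also have "\<dots> = of_nat (Suc (Suc n)) * (-2 * of_nat (catalan (Suc n)))"
    using arg_cong[OF catalan_Suc[of n], of "of_nat :: nat \<Rightarrow> 'a"] by (simp add: algebra_simps)
  finally show ?case
    by (simp only: mult_left_cancel of_nat_eq_0_iff nat.distinct(1) simp_thms)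
qed

definition catalan_fps :: "'a :: field_char_0 fps" where
  "catalan_fps = Abs_fps (\<lambda>n. of_nat (catalan n))"

lemma catalan_fps_sqrt: "(1 - 2 * fps_X * catalan_fps) ^ 2 = (1 - 4 * fps_X :: 'a :: field_char_0 fps)"
proof -
  have X2: "2 * fps_X * catalan_fps = fps_X * (fps_const 2 * (catalan_fps :: 'a fps))"
    by (simp add: numeral_fps_const mult_ac)
  have "1 - 2 * fps_X * catalan_fps = (Abs_fps (\<lambda>n. (-4) ^ n * (1/2 gchoose n)) :: 'a fps)"
  proof (rule fps_ext)
    fix n
    show "fps_nth (1 - 2 * fps_X * catalan_fps) n = fps_nth (Abs_fps (\<lambda>n. (-4) ^ n * (1/2 gchoose n)) :: 'a fps) n"
      using gbinomial_half_Suc[of "n - 1", where 'a='a]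
      unfolding X2 by (cases n) (simp_all add: catalan_fps_def mult.commute)
  qed
  also have "\<dots> = fps_binomial (1/2) oo (fps_const (-4) * fps_X)"
    by (simp add: fps_compose_linear fps_binomial_def)
  finally have "1 - 2 * fps_X * catalan_fps = fps_binomial (1/2 :: 'a) oo (fps_const (-4) * fps_X)" .
  moreover have "fps_binomial (1/2 :: 'a) ^ 2 = fps_binomial 1"
    by (simp add: power2_eq_square flip: fps_binomial_add_mult)
  moreover have "fps_binomial (1 :: 'a) = 1 + fps_X"
    using fps_binomial_of_nat[of 1] by simp
  ultimately show ?thesis
    by (simp add: fps_compose_power fps_compose_add_distrib numeral_fps_const)
qed

lemma catalan_fps_quadratic: "fps_X * catalan_fps ^ 2 = catalan_fps - (1 :: 'a :: field_char_0 fps)"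
proof -
  have "fps_X * (4 * (fps_X * catalan_fps ^ 2 - catalan_fps + 1)) = (0 :: 'a fps)"
    using catalan_fps_sqrt by (simp add: algebra_simps power2_eq_square)
  then have "fps_X * catalan_fps ^ 2 - catalan_fps + 1 = (0 :: 'a fps)"
    by (metis mult_eq_0_iff numeral_neq_fps_zero fps_X_neq_zero)
  then show ?thesis by (simp add: algebra_simps eq_diff_eq)
qed

text \<open>The case \<open>r = 0\<close> is separate: there the closed form degenerates to \<open>0/0\<close> at \<open>m = 0\<close>.\<close>

definition ballot :: "nat \<Rightarrow> nat \<Rightarrow> 'a :: field_char_0" where
  "ballot r m = (if r = 0 then of_bool (m = 0)
                 else of_nat r / of_nat (2*m + r) * of_nat (2*m + r choose m))"

lemma ballot_Suc_Suc: "ballot (r + 2) m = ballot (r + 1) (m + 1) - (ballot r (m + 1) :: 'a :: field_char_0)"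
proof -
  define N where "N = 2*m + r + 2"
  define b :: 'a where "b = of_nat (N choose m)"
  have N: "2*m + (r + 2) = N" "2*(m + 1) + (r + 1) = Suc N" "2*(m + 1) + r = N"
    by (simp_all add: N_def)
  have "Suc m * (Suc N choose Suc m) = Suc N * (N choose m)"
    by (rule Suc_times_binomial)
  then have up: "of_nat (Suc N choose Suc m) = of_nat (Suc N) * b / of_nat (Suc m)"
    unfolding b_def by (simp add: field_simps del: of_nat_Suc flip: of_nat_mult)
  have "Suc m * (N choose Suc m) = (m + r + 2) * (N choose m)"
    unfolding Suc_times_binomial_Suc N_def by simp
  then have right: "of_nat (N choose Suc m) = of_nat (m + r + 2) * b / of_nat (Suc m)"
    unfolding b_def by (simp add: field_simps del: of_nat_Suc flip: of_nat_mult)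
  have nz: "(of_nat N :: 'a) \<noteq> 0" "(of_nat (Suc N) :: 'a) \<noteq> 0" "(of_nat (Suc m) :: 'a) \<noteq> 0"
    by (simp_all only: of_nat_eq_0_iff) (simp_all add: N_def)
  have "ballot (r + 1) (m + 1) - ballot r (m + 1)
      = of_nat (r + 1) / of_nat (Suc N) * of_nat (Suc N choose Suc m)
        - of_nat r / of_nat N * (of_nat (N choose Suc m) :: 'a)"
    unfolding ballot_def N by simp
  also have "\<dots> = of_nat (r + 2) / of_nat N * b"
    unfolding up right using nz by (simp add: field_simps del: of_nat_Suc) (simp add: N_def algebra_simps)
  also have "\<dots> = ballot (r + 2) m"
    unfolding ballot_def N b_def by simp
  finally show ?thesis ..
qed

lemma ballot_1: "ballot 1 m = (of_nat (catalan m) :: 'a :: field_char_0)"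
proof -
  have "(of_nat (2*m + 1 choose m) :: 'a) * of_nat (Suc m) = of_nat (2*m + 1) * of_nat (catalan m) * of_nat (Suc m)"
    using odd_central_binomial_mult[of m] catalan_mult_Suc[of m]
    by (simp only: mult.assoc flip: of_nat_mult)
  then show ?thesis
    unfolding ballot_def by (simp del: of_nat_Suc add: field_simps)
qed

lemma catalan_fps_power_nth: "fps_nth (catalan_fps ^ r) m = (ballot r m :: 'a :: field_char_0)"
proof (induction r arbitrary: m rule: less_induct)
  case (less r)
  consider "r = 0" | "r = 1" | k where "r = k + 2"
    by (metis One_nat_def add_2_eq_Suc' not0_implies_Suc)
  then show ?case
  proof cases
    case 1
    then show ?thesis by (simp add: ballot_def)
  next
    case 2
    then show ?thesis using ballot_1[of m, where 'a='a] by (simp add: catalan_fps_def)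
  next
    case 3
    have "fps_X * catalan_fps ^ (k + 2) = catalan_fps ^ k * (fps_X * catalan_fps ^ 2)"
      by (simp add: power_add power2_eq_square mult_ac)
    also have "\<dots> = catalan_fps ^ (k + 1) - (catalan_fps ^ k :: 'a fps)"
      by (simp add: catalan_fps_quadratic right_diff_distrib power_add)
    finally have "fps_nth (fps_X * catalan_fps ^ (k + 2)) (m + 1)
        = fps_nth (catalan_fps ^ (k + 1)) (m + 1) - (fps_nth (catalan_fps ^ k) (m + 1) :: 'a)"
      by simp
    then show ?thesis
      using less.IH[of "k + 1"] less.IH[of k] ballot_Suc_Suc[of k m, where 'a='a] 3 by simp
  qed
qed

lemma of_real_ballot [simp]: "of_real (ballot r m) = (ballot r m :: 'a :: {real_field, field_char_0})"
  by (simp add: ballot_def)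

section \<open>The Catalan triangle polynomials as formal power series\<close>

lemma catB_eq_ballot: "j \<le> n \<Longrightarrow> catB (Suc n) (Suc j) = ballot (2*j + 2) (n - j)"
proof -
  assume "j \<le> n"
  then have "2 * (n - j) + (2*j + 2) = 2 * Suc n" "Suc n - Suc j = n - j"
    by simp_all
  then show ?thesis
    unfolding catB_def ballot_def by (simp add: field_simps)
qed

lemma polyP_eq_compose_nth:
  "polyP n z = fps_nth ((fps_X * Abs_fps (\<lambda>i. z ^ i)) oo (fps_X * catalan_fps ^ 2)) (Suc n)"
proof -
  have "fps_nth ((fps_X * Abs_fps (\<lambda>i. z ^ i)) oo (fps_X * catalan_fps ^ 2)) (Suc n)
      = (\<Sum>i=0..n. z ^ i * fps_nth (fps_X ^ Suc i * catalan_fps ^ (2*i + 2)) (Suc n))"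
    unfolding fps_compose_nth sum.atLeast0_atMost_Suc_shift
    by (simp add: power_mult_distrib power_mult[symmetric] mult.commute)
  also have "\<dots> = (\<Sum>i=0..n. complex_of_real (catB (Suc n) (Suc i)) * z ^ i)"
    by (intro sum.cong refl)
       (simp only: fps_X_power_mult_nth catalan_fps_power_nth, simp add: catB_eq_ballot)
  finally show ?thesis
    unfolding polyP_def by simp
qed

lemma polyP_fps:
  "Abs_fps (\<lambda>n. polyP n z) = catalan_fps ^ 2 / (1 - fps_const z * (fps_X * catalan_fps ^ 2))"
proof -
  define D :: "complex fps" where "D = fps_X * catalan_fps ^ 2"
  have D0: "fps_nth D 0 = 0"
    by (simp add: D_def)
  have "Abs_fps (\<lambda>i. z ^ i) = inverse (1 - fps_const z * fps_X)"
    using one_minus_const_fps_X_neg_power'[of 1 z] by simp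
  then have "(fps_X * Abs_fps (\<lambda>i. z ^ i)) oo D = D * inverse (1 - fps_const z * D)"
    using D0 by (simp add: fps_compose_mult_distrib fps_inverse_compose fps_compose_sub_distrib)
  moreover have "fps_X * Abs_fps (\<lambda>n. polyP n z) = (fps_X * Abs_fps (\<lambda>i. z ^ i)) oo D"
    by (rule fps_ext) (simp add: D_def polyP_eq_compose_nth split: nat.split)
  ultimately have "fps_X * Abs_fps (\<lambda>n. polyP n z) = fps_X * (catalan_fps ^ 2 * inverse (1 - fps_const z * D))"
    by (simp add: D_def mult.assoc)
  then show ?thesis
    by (simp add: D_def fps_divide_unit)
qed

lemma catA_eq_catB_add:
  assumes "j \<le> n"
  shows "catA (Suc n) (Suc j) = catB (Suc n) (Suc j) + catB (Suc n) j"
proof -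
  obtain k where n: "n = j + k"
    using assms le_Suc_ex by blast
  define M where "M = 2*n + 2"
  define b where "b = real (M choose k)"
  have "Suc k * (Suc M choose Suc k) = Suc M * (M choose k)"
    by (rule Suc_times_binomial)
  then have up: "real (Suc M choose Suc k) = real (Suc M) * b / real (Suc k)"
    unfolding b_def by (simp add: field_simps del: of_nat_Suc flip: of_nat_mult)
  have "Suc k * (M choose Suc k) = (n + j + 2) * (M choose k)"
    unfolding Suc_times_binomial_Suc M_def n by simp
  then have right: "real (M choose Suc k) = real (n + j + 2) * b / real (Suc k)"
    unfolding b_def by (simp add: field_simps del: of_nat_Suc flip: of_nat_mult)
  have idx: "2 * Suc n + 1 = Suc M" "Suc n + 1 - Suc j = Suc k" "2 * Suc n = M"
    "Suc n - Suc j = k" "Suc n - j = Suc k"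
    by (simp_all add: M_def n)
  have "catB (Suc n) (Suc j) + catB (Suc n) j
      = real (Suc j) / real (Suc n) * b + real j / real (Suc n) * (real (n + j + 2) * b / real (Suc k))"
    unfolding catB_def idx right b_def ..
  also have "\<dots> = (2 * real (Suc j) - 1) / real (Suc M) * (real (Suc M) * b / real (Suc k))"
    by (simp add: field_simps del: of_nat_Suc) (simp add: n algebra_simps)
  also have "\<dots> = catA (Suc n) (Suc j)"
    unfolding catA_def idx(1,2) up by (simp add: M_def)
  finally show ?thesis ..
qed

lemma catA_last: "catA (Suc n) (Suc (Suc n)) = catB (Suc n) (Suc n)"
  by (simp add: catA_def catB_def)

lemma polyQ_eq_polyP: "polyQ n z = polyP n z * (z + 1)"
proof -
  define b where "b j = complex_of_real (catB (Suc n) j)" for j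
  have P: "polyP n z = (\<Sum>j=0..n. b (Suc j) * z ^ j)"
    by (simp add: polyP_def b_def)
  have b0: "b 0 = 0"
    by (simp add: b_def catB_def)
  have "polyQ n z = (\<Sum>j=0..n. complex_of_real (catA (Suc n) (Suc j)) * z ^ j)
                    + complex_of_real (catA (Suc n) (Suc (Suc n))) * z ^ Suc n"
    by (simp add: polyQ_def sum.atLeast0_atMost_Suc)
  also have "\<dots> = (\<Sum>j=0..n. (b (Suc j) + b j) * z ^ j) + b (Suc n) * z ^ Suc n"
    using catA_eq_catB_add[of _ n] catA_last
    by (intro arg_cong2[where f = "(+)"] sum.cong) (simp_all add: b_def)
  also have "\<dots> = polyP n z + (\<Sum>j=0..Suc n. b j * z ^ j)"
    by (simp add: P sum.atLeast0_atMost_Suc distrib_right sum.distrib)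
  also have "(\<Sum>j=0..Suc n. b j * z ^ j) = z * polyP n z"
    unfolding sum.atLeast0_atMost_Suc_shift P by (simp add: b0 sum_distrib_left mult_ac)
  finally show ?thesis
    by (simp add: algebra_simps)
qed

section \<open>Convergence for \<open>|w| < 1/4\<close>\<close>

lemma summable_catalan_div_4_power: "summable (\<lambda>n. real (catalan n) / 4^n)"
  by (rule bounded_imp_summable[where B = 2])
     (simp_all only: lessThan_Suc_atMost[symmetric] sum_catalan_div_4_power_le, simp)

lemma catalan_fps_conv_radius: "fps_conv_radius (catalan_fps :: complex fps) \<ge> ereal (1/4)"
proof -
  have "summable (\<lambda>n. fps_nth catalan_fps n * (1/4 :: complex) ^ n)"
    using summable_catalan_div_4_power
    by (simp add: catalan_fps_def power_divide flip: summable_complex_of_real)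
  then show ?thesis
    unfolding fps_conv_radius_def by (metis conv_radius_geI norm_divide norm_one norm_numeral)
qed

lemma norm_less_catalan_fps_conv_radius:
  "norm w < 1/4 \<Longrightarrow> ereal (norm w) < fps_conv_radius (catalan_fps :: complex fps)"
  using catalan_fps_conv_radius by (rule less_le_trans[rotated]) simp

lemma catalan_fps_power_conv_radius: "fps_conv_radius (catalan_fps ^ k :: complex fps) \<ge> ereal (1/4)"
  using catalan_fps_conv_radius fps_conv_radius_power by (rule order.trans)

lemma catalan_gf_eq_eval_fps: "catalan_gf w = eval_fps catalan_fps w"
  by (simp add: catalan_gf_def eval_fps_def catalan_fps_def)

lemma norm_catalan_gf_le:
  assumes "norm w < 1/4"
  shows "norm (catalan_gf w) \<le> 2"
proof -
  have summable: "summable (\<lambda>n. norm (fps_nth catalan_fps n * w ^ n))"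
    by (rule norm_summable_fps) (rule norm_less_catalan_fps_conv_radius[OF assms])
  have "norm (catalan_gf w) \<le> (\<Sum>n. norm (fps_nth catalan_fps n * w ^ n))"
    unfolding catalan_gf_eq_eval_fps eval_fps_def by (rule summable_norm[OF summable])
  also have "\<dots> \<le> (\<Sum>n. real (catalan n) / 4^n)"
  proof (rule suminf_le[OF _ summable summable_catalan_div_4_power])
    fix n
    have "norm (fps_nth catalan_fps n * w ^ n) = real (catalan n) * norm w ^ n"
      by (simp add: catalan_fps_def norm_mult norm_power)
    also have "\<dots> \<le> real (catalan n) * (1/4) ^ n"
      using assms by (intro mult_left_mono power_mono) simp_all
    finally show "norm (fps_nth catalan_fps n * w ^ n) \<le> real (catalan n) / 4^n"
      by (simp add: power_divide)
  qed
  also have "\<dots> \<le> 2"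
    by (rule suminf_le_const[OF summable_catalan_div_4_power sum_catalan_div_4_power_le])
  finally show ?thesis .
qed

lemma catalan_denominator:
  fixes z :: complex
  shows "fps_conv_radius (1 - fps_const z * (fps_X * catalan_fps ^ 2)) \<ge> ereal (1/4)"
    and "norm w < 1/4 \<Longrightarrow>
           eval_fps (1 - fps_const z * (fps_X * catalan_fps ^ 2)) w = 1 - z * (w * catalan_gf w ^ 2)"
proof -
  have "ereal (1/4) \<le> fps_conv_radius (catalan_fps ^ 2 :: complex fps)"
    by (rule catalan_fps_power_conv_radius)
  also have "\<dots> \<le> fps_conv_radius (fps_X * catalan_fps ^ 2 :: complex fps)"
    using fps_conv_radius_mult[of "fps_X :: complex fps" "catalan_fps ^ 2"] by simp
  finally have XC: "ereal (1/4) \<le> fps_conv_radius (fps_X * catalan_fps ^ 2 :: complex fps)" .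
  also have "\<dots> \<le> fps_conv_radius (fps_const z * (fps_X * catalan_fps ^ 2))"
    using fps_conv_radius_mult[of "fps_const z" "fps_X * catalan_fps ^ 2"] by simp
  finally have zXC: "ereal (1/4) \<le> fps_conv_radius (fps_const z * (fps_X * catalan_fps ^ 2))" .
  also have "\<dots> \<le> fps_conv_radius (1 - fps_const z * (fps_X * catalan_fps ^ 2))"
    using fps_conv_radius_diff[of 1 "fps_const z * (fps_X * catalan_fps ^ 2)"] by simp
  finally show "ereal (1/4) \<le> fps_conv_radius (1 - fps_const z * (fps_X * catalan_fps ^ 2))" .
  assume w: "norm w < 1/4"
  then have "ereal (norm w) < ereal (1/4)"
    by simp
  note radii = less_le_trans[OF this XC] less_le_trans[OF this zXC]
    less_le_trans[OF this catalan_fps_conv_radius]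
  from radii show "eval_fps (1 - fps_const z * (fps_X * catalan_fps ^ 2)) w = 1 - z * (w * catalan_gf w ^ 2)"
    by (simp add: eval_fps_diff eval_fps_mult eval_fps_power fps_conv_radius_power catalan_gf_eq_eval_fps
                  less_le_trans[OF _ fps_conv_radius_power])
qed

lemma catalan_gf_quadratic:
  assumes "norm w < 1/4"
  shows "w * catalan_gf w ^ 2 = catalan_gf w - 1"
  using catalan_denominator(2)[OF assms, of 1] norm_less_catalan_fps_conv_radius[OF assms]
  by (simp add: catalan_fps_quadratic eval_fps_diff catalan_gf_eq_eval_fps) (metis minus_diff_eq minus_minus)

lemma catalan_denominator_nonzero:
  assumes "norm z < 1" and "norm w < 1/4"
  shows "1 - z * (w * catalan_gf w ^ 2) \<noteq> 0"
proof -
  have "norm (w * catalan_gf w ^ 2) \<le> 1/4 * 2^2"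
    unfolding norm_mult norm_power
    using assms(2) norm_catalan_gf_le[OF assms(2)] by (intro mult_mono power_mono) simp_all
  then have "norm z * norm (w * catalan_gf w ^ 2) \<le> norm z"
    by (intro mult_left_le) simp_all
  then have "norm (z * (w * catalan_gf w ^ 2)) < 1"
    using assms(1) by (simp add: norm_mult)
  then show ?thesis
    by auto
qed

lemma polyP_sums:
  assumes "norm z < 1" and "norm w < 1/4"
  shows "(\<lambda>n. polyP n z * w ^ n) sums (catalan_gf w ^ 2 / (1 - z * (w * catalan_gf w ^ 2)))"
proof -
  define N :: "complex fps" where "N = catalan_fps ^ 2"
  define D where "D = 1 - fps_const z * (fps_X * catalan_fps ^ 2)"
  have RN: "ereal (1/4) \<le> fps_conv_radius N"
    unfolding N_def by (rule catalan_fps_power_conv_radius)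
  have RD: "ereal (1/4) \<le> fps_conv_radius D"
    unfolding D_def by (rule catalan_denominator(1))
  have pos: "fps_conv_radius N > 0" "fps_conv_radius D > 0" "ereal (1/4) > 0"
    using RN RD by (auto intro: less_le_trans[rotated])
  have nz: "eval_fps D u \<noteq> 0" if "u \<in> eball 0 (ereal (1/4))" for u
    using that catalan_denominator(2) catalan_denominator_nonzero[OF assms(1)] by (simp add: D_def)
  have w: "ereal (norm w) < Min {ereal (1/4), fps_conv_radius N, fps_conv_radius D}"
    using assms(2) RN RD by (simp add: min_def)
  have "(\<lambda>n. fps_nth (N / D) n * w ^ n) sums eval_fps (N / D) w"
    by (rule sums_eval_fps) (rule less_le_trans[OF w fps_conv_radius_divide'[OF pos nz]])
  moreover have "eval_fps (N / D) w = eval_fps N w / eval_fps D w"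
    by (rule eval_fps_divide'[OF pos nz w])
  moreover have "eval_fps N w = catalan_gf w ^ 2"
    unfolding N_def using norm_less_catalan_fps_conv_radius[OF assms(2)]
    by (simp add: eval_fps_power catalan_gf_eq_eval_fps)
  ultimately show ?thesis
    using catalan_denominator(2)[OF assms(2), of z] by (simp add: N_def D_def flip: polyP_fps)
qed

lemma catalan_quotient_identity:
  fixes C w z :: "'a :: field"
  assumes "w * C^2 = C - 1" and "1 - z * (w * C^2) \<noteq> 0" and "w * (1 + z)^2 - z \<noteq> 0"
  shows "C^2 / (1 - z * (w * C^2)) = (C - (z + 1)) / (w * (1 + z)^2 - z)"
proof -
  have "C^2 * (w * (1 + z)^2 - z) = (w * C^2) * (1 + z)^2 - z * C^2"
    by (simp add: algebra_simps)
  also have "\<dots> = (C - (z + 1)) * (1 - z * (w * C^2))"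
    unfolding assms(1) by (simp add: algebra_simps power2_eq_square)
  finally show ?thesis
    using assms(2,3) by (simp add: frac_eq_eq)
qed

theorem theorem2p7:
  fixes z w :: complex
  assumes "norm z < 1" and "norm w < 1/4" and "w * (1 + z)^2 \<noteq> z"
  shows "(\<lambda>n. polyP n z * w ^ n) sums
           ((catalan_gf w - (z + 1)) / (w * (1 + z)^2 - z)) \<and>
         (\<lambda>n. polyQ n z * w ^ n) sums
           ((catalan_gf w - (z + 1)) * (z + 1) / (w * (1 + z)^2 - z)) \<and>
         (\<Sum>n. polyQ n z * w ^ n) = (\<Sum>n. polyP n z * w ^ n) * (z + 1)"
proof -
  have P: "(\<lambda>n. polyP n z * w ^ n) sums ((catalan_gf w - (z + 1)) / (w * (1 + z)^2 - z))"
    using polyP_sums[OF assms(1,2)] assms(3)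
      catalan_quotient_identity[OF catalan_gf_quadratic[OF assms(2)] catalan_denominator_nonzero[OF assms(1,2)]]
    by simp
  have Q: "(\<lambda>n. polyQ n z * w ^ n) sums ((catalan_gf w - (z + 1)) * (z + 1) / (w * (1 + z)^2 - z))"
    using sums_mult2[OF P, of "z + 1"] by (simp add: polyQ_eq_polyP algebra_simps)
  show ?thesis
    using P Q by (simp add: sums_unique[OF P, symmetric] sums_unique[OF Q, symmetric])
qed

end
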